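(* Let $Q_k^A,Q_k^B$ be the SDQ iterates, $Q_k^{\mathrm{err}}=Q_k^A-Q_k^B$, and $w_k^A,w_k^B$ the associated noise vectors (see context). Define \[ Q_{k+1}^{\mathrm{err}_U}=(I+\alpha\gamma DP\Pi_{Q_k^{\mathrm{err}_U}}-\alpha D)Q_k^{\mathrm{err}_U}+\alpha w_k^A-\alpha w_k^B, \] with initial vector $Q_0^{\mathrm{err}_U}\in\mathbb{R}^{|\mathcal{S}||\mathcal{A}|}$. If $Q_0^{\mathrm{err}_U}\ge Q_0^{\mathrm{err}}$ element-wise, then $Q_k^{\mathrm{err}_U}\ge Q_k^{\mathrm{err}}$ element-wise for all $k\ge0$.
   Context: Finite MDP with states $\mathcal{S}=\{1,\dots,|\mathcal{S}|\}$, actions $\mathcal{A}=\{1,\dots,|\mathcal{A}|\}$, transitions $P(s'|s,a)$, bounded deterministic reward $r(s,a,s')$, discount $\gamma\in(0,1)$. Sampling distribution $d(s,a)>0$ on $\mathcal{S}\times\mathcal{A}$; at iteration $k$, $(s_k,a_k)\sim d$ i.i.d., $s_k'\sim P(\cdot|s_k,a_k)$, $r_{k+1}=r(s_k,a_k,s_k')$. Constant step-size $\alpha\in(0,1)$. SDQ: only entry $(s_k,a_k)$ is updated, $Q_{k+1}^A(s_k,a_k)=Q_k^A(s_k,a_k)+\alpha\{r_{k+1}+\gamma Q_k^A(s_k',\arg\max_aQ_k^B(s_k',a))-Q_k^A(s_k,a_k)\}$ and symmetrically for $B$ with roles of $A,B$ swapped. Vector notation: $Q\in\mathbb{R}^{|\mathcal{S}||\mathcal{A}|}$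 stacks $Q(\cdot,1),\dots,Q(\cdot,|\mathcal{A}|)$, so $Q(s,a)=(e_a\otimes e_s)^TQ$. $D$ is the diagonal matrix with entry $d(s,a)$ at position $(s,a)$. $P\in\mathbb{R}^{|\mathcal{S}||\mathcal{A}|\times|\mathcal{S}|}$ has row $(s,a)$ equal to $P(\cdot|s,a)$. $R(s,a)=\mathbb{E}[r(s,a,s')|s,a]$. For $Q$, $\pi_Q(s)=\arg\max_aQ(s,a)$ (fixed tie-breaking) and $\Pi_Q\in\mathbb{R}^{|\mathcal{S}|\times|\mathcal{S}||\mathcal{A}|}$ has $s$-th row $e_{\pi_Q(s)}^T\otimes e_s^T$. Noise: $w_k^A=(e_{a_k}\otimes e_{s_k})r_{k+1}+\gamma(e_{a_k}\otimes e_{s_k})e_{s_k'}^T\Pi_{Q_k^B}Q_k^A-(e_{a_k}\otimes e_{s_k})(e_{a_k}\otimes e_{s_k})^TQ_k^A-(DR+\gamma DP\Pi_{Q_k^B}Q_k^A-DQ_k^A)$, and $w_k^B$ is the same with $A$ and $B$ swapped. *)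

theory Defs
  imports "HOL-Analysis.Analysis"
begin

text \<open>States form the finite type 's, actions the finite
  type 'a; Q-vectors live in real^('s \<times> 'a), indexed by the pair (s,a), so the
  vector e_a \<otimes> e_s of the paper is axis (s,a) 1.\<close>

definition Dmat :: "('s::finite \<times> 'a::finite \<Rightarrow> real) \<Rightarrow> real^('s \<times> 'a)^('s \<times> 'a)" where
  "Dmat d = (\<chi> i j. if i = j then d i else 0)"

definition Pmat :: "('s::finite \<times> 'a::finite \<Rightarrow> 's \<Rightarrow> real) \<Rightarrow> real^'s^('s \<times> 'a)" where
  "Pmat P = (\<chi> i s'. P i s')"

text \<open>Row s of Pi_Q is e_{pi_Q(s)}^T \<otimes> e_s^T; pol is the greedy policy with a fixed
  tie-breaking rule.\<close>
definition PiMat :: "(real^('s::finite \<times> 'a::finite) \<Rightarrow> 's \<Rightarrow> 'a) \<Rightarrow> real^('s \<times> 'a) \<Rightarrow> real^('s \<times> 'a)^'s" where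
  "PiMat pol Q = (\<chi> s j. if j = (s, pol Q s) then 1 else 0)"

definition is_greedy :: "(real^('s::finite \<times> 'a::finite) \<Rightarrow> 's \<Rightarrow> 'a) \<Rightarrow> bool" where
  "is_greedy pol \<longleftrightarrow> (\<forall>Q s b. Q $ (s, b) \<le> Q $ (s, pol Q s))"

definition Rvec :: "('s::finite \<times> 'a::finite \<Rightarrow> 's \<Rightarrow> real) \<Rightarrow> ('s \<Rightarrow> 'a \<Rightarrow> 's \<Rightarrow> real) \<Rightarrow> real^('s \<times> 'a)" where
  "Rvec P r = (\<chi> i. \<Sum>s'\<in>UNIV. P i s' * r (fst i) (snd i) s')"

text \<open>SDQ iterates along a sample path (s_k, a_k, s'_k): only entry (s_k,a_k) of both
  estimates is updated, using the values at iteration k.\<close>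
fun sdq :: "real \<Rightarrow> real \<Rightarrow> ('s::finite \<Rightarrow> 'a::finite \<Rightarrow> 's \<Rightarrow> real) \<Rightarrow> (real^('s \<times> 'a) \<Rightarrow> 's \<Rightarrow> 'a)
    \<Rightarrow> (nat \<Rightarrow> 's) \<Rightarrow> (nat \<Rightarrow> 'a) \<Rightarrow> (nat \<Rightarrow> 's)
    \<Rightarrow> real^('s \<times> 'a) \<Rightarrow> real^('s \<times> 'a) \<Rightarrow> nat \<Rightarrow> (real^('s \<times> 'a)) \<times> (real^('s \<times> 'a))" where
  "sdq \<alpha> \<gamma> r pol s a s' QA0 QB0 0 = (QA0, QB0)"
| "sdq \<alpha> \<gamma> r pol s a s' QA0 QB0 (Suc k) =
     (let QA = fst (sdq \<alpha> \<gamma> r pol s a s' QA0 QB0 k);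
          QB = snd (sdq \<alpha> \<gamma> r pol s a s' QA0 QB0 k);
          i = (s k, a k);
          rr = r (s k) (a k) (s' k)
      in ((\<chi> j. if j = i then QA $ i + \<alpha> * (rr + \<gamma> * QA $ (s' k, pol QB (s' k)) - QA $ i) else QA $ j),
          (\<chi> j. if j = i then QB $ i + \<alpha> * (rr + \<gamma> * QB $ (s' k, pol QA (s' k)) - QB $ i) else QB $ j)))"

text \<open>Noise vector w^A for current estimates QA (updated) and QB (used for the greedy
  action); w^B is the same with the roles swapped. Here
  (e_a \<otimes> e_s) e_{s'}^T \<Pi>_{QB} QA = ((\<Pi>_{QB} QA) at s') (e_a \<otimes> e_s) and
  (e_a \<otimes> e_s)(e_a \<otimes> e_s)^T QA = QA(s,a) (e_a \<otimes> e_s).\<close>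
definition noise :: "real \<Rightarrow> ('s::finite \<times> 'a::finite \<Rightarrow> real) \<Rightarrow> ('s \<times> 'a \<Rightarrow> 's \<Rightarrow> real) \<Rightarrow> ('s \<Rightarrow> 'a \<Rightarrow> 's \<Rightarrow> real)
    \<Rightarrow> (real^('s \<times> 'a) \<Rightarrow> 's \<Rightarrow> 'a) \<Rightarrow> 's \<Rightarrow> 'a \<Rightarrow> 's
    \<Rightarrow> real^('s \<times> 'a) \<Rightarrow> real^('s \<times> 'a) \<Rightarrow> real^('s \<times> 'a)" where
  "noise \<gamma> d P r pol sk ak sk' QA QB =
     (let e = (axis (sk, ak) 1 :: real^('s \<times> 'a))
      in r sk ak sk' *s e
         + (\<gamma> * (PiMat pol QB *v QA) $ sk') *s e
         - (QA $ (sk, ak)) *s e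
         - (Dmat d *v Rvec P r + \<gamma> *s ((Dmat d ** Pmat P ** PiMat pol QB) *v QA) - Dmat d *v QA))"

definition wA where
  "wA \<alpha> \<gamma> d P r pol s a s' QA0 QB0 k =
     noise \<gamma> d P r pol (s k) (a k) (s' k)
       (fst (sdq \<alpha> \<gamma> r pol s a s' QA0 QB0 k)) (snd (sdq \<alpha> \<gamma> r pol s a s' QA0 QB0 k))"

definition wB where
  "wB \<alpha> \<gamma> d P r pol s a s' QA0 QB0 k =
     noise \<gamma> d P r pol (s k) (a k) (s' k)
       (snd (sdq \<alpha> \<gamma> r pol s a s' QA0 QB0 k)) (fst (sdq \<alpha> \<gamma> r pol s a s' QA0 QB0 k))"

fun QerrU where
  "QerrU \<alpha> \<gamma> d P r pol s a s' QA0 QB0 QU0 0 = QU0"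
| "QerrU \<alpha> \<gamma> d P r pol s a s' QA0 QB0 QU0 (Suc k) =
     (let QU = QerrU \<alpha> \<gamma> d P r pol s a s' QA0 QB0 QU0 k
      in (mat 1 + (\<alpha> * \<gamma>) *\<^sub>R (Dmat d ** Pmat P ** PiMat pol QU) - \<alpha> *\<^sub>R Dmat d) *v QU
         + \<alpha> *s wA \<alpha> \<gamma> d P r pol s a s' QA0 QB0 k
         - \<alpha> *s wB \<alpha> \<gamma> d P r pol s a s' QA0 QB0 k)"

end

theory Submission
  imports Defs
begin

text \<open>By construction the noise is the deviation of a sampled update from its expected
  update. Subtracting the two SDQ updates therefore gives the error recursion
  \<open>Qerr' = (I - \<alpha>D) Qerr + \<alpha>\<gamma> DP (\<Pi>_QB QA - \<Pi>_QA QB) + \<alpha>(wA - wB)\<close>,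
  which has the same noise term as the comparison system
  \<open>U' = (I - \<alpha>D) U + \<alpha>\<gamma> DP \<Pi>_U U + \<alpha>(wA - wB)\<close>.
  Since greedy actions maximise, \<open>\<Pi>_QB QA - \<Pi>_QA QB \<le> \<Pi>_QA (QA - QB) \<le> \<Pi>_U U\<close>
  whenever \<open>QA - QB \<le> U\<close>; and \<open>I - \<alpha>D\<close> and \<open>DP\<close> have nonnegative entries
  (as \<open>\<alpha> d \<le> 1\<close>), so they preserve the componentwise order.\<close>

lemma Dmat_matrix_mul_nth: "(Dmat d ** M) $ i $ j = d i * M $ i $ j"
  by (simp add: Dmat_def matrix_matrix_mult_def if_distrib[of "\<lambda>c. c * _"] cong: if_cong)

lemma PiMat_mult_vec_nth: "(PiMat pol Q *v V) $ s = V $ (s, pol Q s)"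
  by (simp add: PiMat_def matrix_vector_mult_def if_distrib[of "\<lambda>c. c * _"] cong: if_cong)

lemma nonneg_matrix_mult_vec_mono:
  fixes M :: "real^'n::finite^'m::finite"
  assumes "\<And>i j. 0 \<le> M $ i $ j" and "V \<le> W"
  shows "M *v V \<le> M *v W"
  using assms by (auto simp: less_eq_vec_def matrix_vector_mult_def intro!: sum_mono mult_left_mono)

lemma Dmat_Pmat_nonneg:
  assumes "\<And>i. 0 \<le> d i" and "\<And>i s1. 0 \<le> P i s1"
  shows "0 \<le> (Dmat d ** Pmat P) $ i $ s1"
  using assms by (simp add: Dmat_matrix_mul_nth Pmat_def)

lemma id_minus_Dmat_nonneg:
  assumes "\<And>i. 0 \<le> d i" and "(\<Sum>i\<in>UNIV. d i) = 1" and "0 \<le> c" and "c \<le> 1"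
  shows "0 \<le> (mat 1 - c *\<^sub>R Dmat d) $ i $ j"
proof -
  have "d i \<le> (\<Sum>i\<in>UNIV. d i)"
    by (rule member_le_sum) (simp_all add: assms(1))
  then have "c * d i \<le> 1"
    using assms by (intro mult_le_one) simp_all
  then show ?thesis by (auto simp: mat_def Dmat_def)
qed

lemma greedy_PiMat_diff_le:
  assumes "is_greedy pol" and "QA - QB \<le> U"
  shows "PiMat pol QB *v QA - PiMat pol QA *v QB \<le> PiMat pol U *v U"
  unfolding less_eq_vec_def
proof
  fix x
  have "QA $ (x, pol QB x) \<le> QA $ (x, pol QA x)" and "U $ (x, pol QA x) \<le> U $ (x, pol U x)"
    using assms(1) unfolding is_greedy_def by blast+
  moreover have "QA $ (x, pol QA x) - QB $ (x, pol QA x) \<le> U $ (x, pol QA x)"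
    using assms(2) by (simp add: less_eq_vec_def)
  ultimately show "(PiMat pol QB *v QA - PiMat pol QA *v QB) $ x \<le> (PiMat pol U *v U) $ x"
    by (simp add: PiMat_mult_vec_nth)
qed

lemma tabular_update_eq_mean_plus_noise:
  "(\<chi> j. if j = (sk, ak) then QA $ (sk, ak) + \<alpha> * (r sk ak x + \<gamma> * QA $ (x, pol QB x) - QA $ (sk, ak))
          else QA $ j)
   = QA + \<alpha> *\<^sub>R (Dmat d *v Rvec P r + \<gamma> *\<^sub>R ((Dmat d ** Pmat P) *v (PiMat pol QB *v QA)) - Dmat d *v QA
                  + noise \<gamma> d P r pol sk ak x QA QB)"
  by (simp add: noise_def Let_def vec_eq_iff axis_def PiMat_mult_vec_nth scalar_mult_eq_scaleR
      matrix_vector_mul_assoc)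

lemma sdq_error_Suc:
  assumes "sdq \<alpha> \<gamma> r pol s a s' QA0 QB0 k = (QA, QB)"
  shows "fst (sdq \<alpha> \<gamma> r pol s a s' QA0 QB0 (Suc k)) - snd (sdq \<alpha> \<gamma> r pol s a s' QA0 QB0 (Suc k))
    = (mat 1 - \<alpha> *\<^sub>R Dmat d) *v (QA - QB)
      + (\<alpha> * \<gamma>) *\<^sub>R ((Dmat d ** Pmat P) *v (PiMat pol QB *v QA - PiMat pol QA *v QB))
      + \<alpha> *\<^sub>R (wA \<alpha> \<gamma> d P r pol s a s' QA0 QB0 k - wB \<alpha> \<gamma> d P r pol s a s' QA0 QB0 k)"
  using assms
  by (simp add: tabular_update_eq_mean_plus_noise[where d = d and P = P] wA_def wB_def
      scaleR_matrix_vector_assoc[symmetric] algebra_simps)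

lemma QerrU_Suc:
  assumes "QerrU \<alpha> \<gamma> d P r pol s a s' QA0 QB0 QU0 k = U"
  shows "QerrU \<alpha> \<gamma> d P r pol s a s' QA0 QB0 QU0 (Suc k)
    = (mat 1 - \<alpha> *\<^sub>R Dmat d) *v U
      + (\<alpha> * \<gamma>) *\<^sub>R ((Dmat d ** Pmat P) *v (PiMat pol U *v U))
      + \<alpha> *\<^sub>R (wA \<alpha> \<gamma> d P r pol s a s' QA0 QB0 k - wB \<alpha> \<gamma> d P r pol s a s' QA0 QB0 k)"
  using assms
  by (simp add: scaleR_matrix_vector_assoc[symmetric] matrix_vector_mul_assoc scalar_mult_eq_scaleR
      algebra_simps)

theorem proposition3:
  fixes P :: "'s::finite \<times> 'a::finite \<Rightarrow> 's \<Rightarrow> real"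
    and d :: "'s \<times> 'a \<Rightarrow> real"
    and r :: "'s \<Rightarrow> 'a \<Rightarrow> 's \<Rightarrow> real"
    and pol :: "real^('s \<times> 'a) \<Rightarrow> 's \<Rightarrow> 'a"
    and \<alpha> \<gamma> :: real
    and s :: "nat \<Rightarrow> 's" and a :: "nat \<Rightarrow> 'a" and s' :: "nat \<Rightarrow> 's"
    and QA0 QB0 QU0 :: "real^('s \<times> 'a)"
  assumes P_nonneg: "\<forall>i s1. 0 \<le> P i s1"
    and P_sum: "\<forall>i. (\<Sum>s1\<in>UNIV. P i s1) = 1"
    and d_pos: "\<forall>i. 0 < d i"
    and d_sum: "(\<Sum>i\<in>UNIV. d i) = 1"
    and gamma: "0 < \<gamma>" "\<gamma> < 1"
    and alpha: "0 < \<alpha>" "\<alpha> < 1"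
    and greedy: "is_greedy pol"
    and init: "\<forall>i. QU0 $ i \<ge> (QA0 - QB0) $ i"
  shows "\<forall>k i. QerrU \<alpha> \<gamma> d P r pol s a s' QA0 QB0 QU0 k $ i
           \<ge> (fst (sdq \<alpha> \<gamma> r pol s a s' QA0 QB0 k) - snd (sdq \<alpha> \<gamma> r pol s a s' QA0 QB0 k)) $ i"
proof -
  have step_nonneg: "0 \<le> (mat 1 - \<alpha> *\<^sub>R Dmat d) $ i $ j" for i j
    using d_sum alpha by (intro id_minus_Dmat_nonneg) (simp_all add: d_pos[rule_format] less_imp_le)
  have DP_nonneg: "0 \<le> (Dmat d ** Pmat P) $ i $ j" for i j
    by (intro Dmat_Pmat_nonneg) (simp_all add: d_pos[rule_format] P_nonneg[rule_format] less_imp_le)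
  have "fst (sdq \<alpha> \<gamma> r pol s a s' QA0 QB0 k) - snd (sdq \<alpha> \<gamma> r pol s a s' QA0 QB0 k)
        \<le> QerrU \<alpha> \<gamma> d P r pol s a s' QA0 QB0 QU0 k" for k
  proof (induction k)
    case 0
    then show ?case using init by (simp add: less_eq_vec_def)
  next
    case (Suc k)
    obtain QA QB where QAB: "sdq \<alpha> \<gamma> r pol s a s' QA0 QB0 k = (QA, QB)" by fastforce
    define U where "U = QerrU \<alpha> \<gamma> d P r pol s a s' QA0 QB0 QU0 k"
    have "QA - QB \<le> U" using Suc.IH by (simp add: QAB U_def)
    then show ?case
      unfolding sdq_error_Suc[OF QAB, where d = d and P = P] QerrU_Suc[OF U_def[symmetric]]
      using alpha gamma
      by (intro add_mono order.refl scaleR_left_mono nonneg_matrix_mult_vec_mono step_nonneg DP_nonneg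
          greedy_PiMat_diff_le[OF greedy]) simp_all
  qed
  then show ?thesis by (simp add: less_eq_vec_def)
qed

end
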